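(* Let $X$ be a collectionwise normal Tychonoff space containing a non-trivial convergent sequence. If $F(X)$ has a $\mathfrak{G}$-base, then $X$ is $\aleph_1$-compact. *)

theory Defs
  imports "HOL-Analysis.Analysis"
begin

definition tychonoff_space :: "'a topology \<Rightarrow> bool" where
  "tychonoff_space X \<longleftrightarrow> completely_regular_space X \<and> t1_space X"

definition discrete_family :: "'a topology \<Rightarrow> 'i set \<Rightarrow> ('i \<Rightarrow> 'a set) \<Rightarrow> bool" where
  "discrete_family X I F \<longleftrightarrow>
     (\<forall>x\<in>topspace X. \<exists>W. openin X W \<and> x \<in> W \<and>
        (\<forall>i\<in>I. \<forall>j\<in>I. W \<inter> F i \<noteq> {} \<and> W \<inter> F j \<noteq> {} \<longrightarrow> i = j))"

definition collectionwise_normal :: "'a topology \<Rightarrow> bool" where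
  "collectionwise_normal X \<longleftrightarrow> t1_space X \<and>
     (\<forall>\<F>. (\<forall>F\<in>\<F>. closedin X F) \<and> discrete_family X \<F> id \<longrightarrow>
        (\<exists>V. (\<forall>F\<in>\<F>. openin X (V F) \<and> F \<subseteq> V F) \<and> discrete_family X \<F> V))"

definition has_nontrivial_convergent_seq :: "'a topology \<Rightarrow> bool" where
  "has_nontrivial_convergent_seq X \<longleftrightarrow>
     (\<exists>s x. x \<in> topspace X \<and> range s \<subseteq> topspace X \<and> inj s \<and> (\<forall>n. s n \<noteq> x) \<and>
            limitin X s x sequentially)"

definition aleph1_compact :: "'a topology \<Rightarrow> bool" where
  "aleph1_compact X \<longleftrightarrow>
     (\<forall>A. A \<subseteq> topspace X \<and> uncountable A \<longrightarrow> (\<exists>x\<in>topspace X. x \<in> X derived_set_of A))"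

text \<open>Words over the alphabet X; a letter (x, True) stands for x, (x, False) for x^-1.\<close>
type_synonym 'a word = "('a \<times> bool) list"

definition reduced :: "'a word \<Rightarrow> bool" where
  "reduced w \<longleftrightarrow> (\<forall>i. Suc i < length w \<longrightarrow>
      \<not> (fst (w ! i) = fst (w ! Suc i) \<and> snd (w ! i) \<noteq> snd (w ! Suc i)))"

fun red :: "'a word \<Rightarrow> 'a word" where
  "red [] = []"
| "red (a # w) = (case red w of
       [] \<Rightarrow> [a]
     | b # v \<Rightarrow> (if fst a = fst b \<and> snd a \<noteq> snd b then v else a # b # v))"

definition fg_carrier :: "'a topology \<Rightarrow> 'a word set" where
  "fg_carrier X = {w. reduced w \<and> fst ` set w \<subseteq> topspace X}"

definition fg_mult :: "'a word \<Rightarrow> 'a word \<Rightarrow> 'a word" where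
  "fg_mult w v = red (w @ v)"

definition fg_inv :: "'a word \<Rightarrow> 'a word" where
  "fg_inv w = rev (map (\<lambda>(x, b). (x, \<not> b)) w)"

definition fg_unit :: "'a word" where
  "fg_unit = []"

definition fg_embed :: "'a \<Rightarrow> 'a word" where
  "fg_embed x = [(x, True)]"

definition fg_group_topology :: "'a topology \<Rightarrow> 'a word topology \<Rightarrow> bool" where
  "fg_group_topology X T \<longleftrightarrow> topspace T = fg_carrier X \<and>
     continuous_map (prod_topology T T) T (\<lambda>(w, v). fg_mult w v) \<and>
     continuous_map T T fg_inv"

text \<open>F(X): the finest group topology on F_a(X) for which the canonical map X \<rightarrow> F_a(X)
  is continuous, i.e. the topology generated by all such group topologies.\<close>
definition free_top_group :: "'a topology \<Rightarrow> 'a word topology" where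
  "free_top_group X = topology_generated_by
     (\<Union>{ {U. openin T U} | T. fg_group_topology X T \<and> continuous_map X T fg_embed })"

definition has_G_base :: "'g topology \<Rightarrow> 'g \<Rightarrow> bool" where
  "has_G_base T e \<longleftrightarrow> (\<exists>U :: (nat \<Rightarrow> nat) \<Rightarrow> 'g set.
     (\<forall>\<alpha>. U \<alpha> \<subseteq> topspace T \<and> e \<in> T interior_of (U \<alpha>)) \<and>
     (\<forall>W. openin T W \<and> e \<in> W \<longrightarrow> (\<exists>\<alpha>. U \<alpha> \<subseteq> W)) \<and>
     (\<forall>\<alpha> \<beta>. (\<forall>n. \<alpha> n \<le> \<beta> n) \<longrightarrow> U \<beta> \<subseteq> U \<alpha>))"

end

theory Submission
  imports Defs
begin

text \<open>
  Suppose \<open>A\<close> is uncountable without accumulation points and \<open>s\<^sub>n \<rightarrow> p\<close> is a non-trivial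
  convergent sequence. Removing the countable closed set \<open>K = {p} \<union> {s\<^sub>n}\<close> leaves an uncountable
  closed discrete set \<open>D\<close>. For \<open>a \<in> D\<close> the words \<open>a s\<^sub>n p\<^sup>-\<^sup>1 a\<^sup>-\<^sup>1\<close> converge to the identity of
  \<open>F(X)\<close>, and a \<open>\<G>\<close>-base together with the uncountability of \<open>D\<close> lets one pick one index \<open>\<mu>(a)\<close> per
  sequence so that every neighbourhood of the identity contains one of the picked words.

  Let \<open>\<phi>, \<psi>\<close> be continuous with \<open>\<phi>(p) = 0 \<noteq> \<phi>(s\<^sub>n)\<close> and \<open>\<psi> = 0\<close> on \<open>K\<close>. The assignment
  \<open>x \<mapsto> (\<phi> x, \<psi> x)\<close> extends to a homomorphism from the free group into the affine group of the
  line, and the topology pulled back along it is an admissible group topology, hence coarser than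
  that of \<open>F(X)\<close>. The word \<open>a s\<^sub>m p\<^sup>-\<^sup>1 a\<^sup>-\<^sup>1\<close> is sent to an affine map with translation part
  \<open>\<psi>(a) (1 - exp \<phi>(s\<^sub>m))\<close>. By collectionwise normality \<open>\<psi>\<close> may take arbitrary values on the closed
  discrete set \<open>D\<close>, so all picked words can be given translation parts of absolute value 2; then the
  preimage of \<open>{|u| < 1}\<close> is a neighbourhood of the identity containing none of them.
\<close>

section \<open>Words and the affine group\<close>

definition cancels :: "'a \<times> bool \<Rightarrow> 'a \<times> bool \<Rightarrow> bool" where
  "cancels a b \<longleftrightarrow> fst a = fst b \<and> snd a \<noteq> snd b"

lemma reduced_iff_successively: "reduced w \<longleftrightarrow> successively (\<lambda>a b. \<not> cancels a b) w"
  by (simp add: reduced_def successively_conv_nth cancels_def)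

lemma set_red_subset: "set (red w) \<subseteq> set w"
  by (induction w) (auto split: list.splits)

lemma reduced_red: "reduced (red w)"
  unfolding reduced_iff_successively
  by (induction w) (auto split: list.splits simp: cancels_def successively_Cons)

lemma reduced_fg_inv: "reduced w \<Longrightarrow> reduced (fg_inv w)"
  unfolding reduced_iff_successively fg_inv_def
  by (simp add: successively_map case_prod_beta cancels_def) (metis (mono_tags, lifting) successively_mono)

lemma fg_mult_in_carrier: "w \<in> fg_carrier X \<Longrightarrow> v \<in> fg_carrier X \<Longrightarrow> fg_mult w v \<in> fg_carrier X"
  using set_red_subset[of "w @ v"] by (fastforce simp: fg_carrier_def fg_mult_def reduced_red)

lemma fg_inv_in_carrier: "w \<in> fg_carrier X \<Longrightarrow> fg_inv w \<in> fg_carrier X"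
  by (auto simp: fg_carrier_def reduced_fg_inv) (auto simp: fg_inv_def)

lemma fg_embed_in_carrier: "x \<in> topspace X \<Longrightarrow> fg_embed x \<in> fg_carrier X"
  by (auto simp: fg_carrier_def fg_embed_def reduced_def)

lemma fg_unit_in_carrier: "fg_unit \<in> fg_carrier X"
  by (simp add: fg_carrier_def fg_unit_def reduced_def)

text \<open>The pair \<open>(t, u)\<close> stands for the affine map \<open>x \<mapsto> e\<^sup>t x + u\<close> of the real line.\<close>

definition aff_mult :: "real \<times> real \<Rightarrow> real \<times> real \<Rightarrow> real \<times> real" where
  "aff_mult a b = (fst a + fst b, exp (fst a) * snd b + snd a)"

definition aff_inv :: "real \<times> real \<Rightarrow> real \<times> real" where
  "aff_inv a = (- fst a, - (exp (- fst a) * snd a))"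

lemma aff_mult_assoc: "aff_mult (aff_mult a b) c = aff_mult a (aff_mult b c)"
  by (simp add: aff_mult_def exp_add algebra_simps)

lemma aff_mult_unit [simp]: "aff_mult (0, 0) a = a" "aff_mult a (0, 0) = a"
  by (auto simp: aff_mult_def)

lemma aff_mult_inv [simp]: "aff_mult a (aff_inv a) = (0, 0)" "aff_mult (aff_inv a) a = (0, 0)"
  by (auto simp: aff_mult_def aff_inv_def exp_minus field_simps)

lemma aff_inv_aff_inv [simp]: "aff_inv (aff_inv a) = a"
  by (auto simp: aff_inv_def exp_minus field_simps)

lemma aff_inv_aff_mult: "aff_inv (aff_mult a b) = aff_mult (aff_inv b) (aff_inv a)"
  by (simp add: aff_mult_def aff_inv_def algebra_simps flip: exp_add)

definition aff_letter :: "('a \<Rightarrow> real) \<Rightarrow> ('a \<Rightarrow> real) \<Rightarrow> 'a \<times> bool \<Rightarrow> real \<times> real" where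
  "aff_letter \<phi> \<psi> a =
     (if snd a then (\<phi> (fst a), \<psi> (fst a)) else aff_inv (\<phi> (fst a), \<psi> (fst a)))"

definition aff_eval :: "('a \<Rightarrow> real) \<Rightarrow> ('a \<Rightarrow> real) \<Rightarrow> 'a word \<Rightarrow> real \<times> real" where
  "aff_eval \<phi> \<psi> w = foldr (\<lambda>a r. aff_mult (aff_letter \<phi> \<psi> a) r) w (0, 0)"

lemma aff_eval_Nil [simp]: "aff_eval \<phi> \<psi> [] = (0, 0)"
  and aff_eval_Cons [simp]: "aff_eval \<phi> \<psi> (a # w) = aff_mult (aff_letter \<phi> \<psi> a) (aff_eval \<phi> \<psi> w)"
  by (auto simp: aff_eval_def)

lemma aff_eval_append: "aff_eval \<phi> \<psi> (w @ v) = aff_mult (aff_eval \<phi> \<psi> w) (aff_eval \<phi> \<psi> v)"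
  by (induction w) (auto simp: aff_mult_assoc)

lemma aff_letter_cancel: "cancels a b \<Longrightarrow> aff_mult (aff_letter \<phi> \<psi> a) (aff_letter \<phi> \<psi> b) = (0, 0)"
  by (cases a; cases b) (auto simp: cancels_def aff_letter_def)

lemma aff_eval_red: "aff_eval \<phi> \<psi> (red w) = aff_eval \<phi> \<psi> w"
proof (induction w)
  case (Cons a w)
  show ?case
  proof (cases "red w")
    case (Cons b v)
    with Cons.IH have IH: "aff_eval \<phi> \<psi> w = aff_mult (aff_letter \<phi> \<psi> b) (aff_eval \<phi> \<psi> v)"
      by simp
    show ?thesis
    proof (cases "cancels a b")
      case True
      then show ?thesis
        using Cons IH aff_letter_cancel[OF True]
        by (simp add: cancels_def flip: aff_mult_assoc)
    next
      case False
      then show ?thesis using Cons IH by (auto simp: cancels_def)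
    qed
  qed (use Cons.IH in simp)
qed simp

lemma aff_eval_fg_mult: "aff_eval \<phi> \<psi> (fg_mult w v) = aff_mult (aff_eval \<phi> \<psi> w) (aff_eval \<phi> \<psi> v)"
  by (simp add: fg_mult_def aff_eval_red aff_eval_append)

lemma aff_eval_fg_inv: "aff_eval \<phi> \<psi> (fg_inv w) = aff_inv (aff_eval \<phi> \<psi> w)"
proof -
  have "aff_letter \<phi> \<psi> (case a of (x, b) \<Rightarrow> (x, \<not> b)) = aff_inv (aff_letter \<phi> \<psi> a)" for a
    by (cases a) (auto simp: aff_letter_def)
  moreover have "aff_inv (0, 0) = (0, 0)"
    by (simp add: aff_inv_def)
  ultimately show ?thesis
    unfolding fg_inv_def by (induction w) (simp_all add: aff_eval_append aff_inv_aff_mult)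
qed

lemma aff_eval_fg_embed [simp]: "aff_eval \<phi> \<psi> (fg_embed x) = (\<phi> x, \<psi> x)"
  by (simp add: fg_embed_def aff_letter_def)

section \<open>Group topologies on the free group induced by the affine group\<close>

definition affine_pullback_topology ::
    "'a topology \<Rightarrow> ('a \<Rightarrow> real) \<Rightarrow> ('a \<Rightarrow> real) \<Rightarrow> 'a word topology" where
  "affine_pullback_topology X \<phi> \<psi> = pullback_topology (fg_carrier X) (aff_eval \<phi> \<psi>) euclidean"

lemma topspace_affine_pullback_topology [simp]:
  "topspace (affine_pullback_topology X \<phi> \<psi>) = fg_carrier X"
  by (auto simp: affine_pullback_topology_def topspace_pullback_topology)

lemma continuous_map_aff_eval:
  "continuous_map (affine_pullback_topology X \<phi> \<psi>) euclidean (aff_eval \<phi> \<psi>)"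
  using continuous_map_pullback[of euclidean euclidean id "fg_carrier X" "aff_eval \<phi> \<psi>"]
  by (simp add: affine_pullback_topology_def)

lemma continuous_map_into_affine_pullback_topology:
  assumes "continuous_map Z euclidean (aff_eval \<phi> \<psi> \<circ> g)" "g \<in> topspace Z \<rightarrow> fg_carrier X"
  shows "continuous_map Z (affine_pullback_topology X \<phi> \<psi>) g"
  unfolding affine_pullback_topology_def
  by (rule continuous_map_pullback') (use assms in auto)

lemma openin_affine_pullback_topology:
  "open S \<Longrightarrow> openin (affine_pullback_topology X \<phi> \<psi>) {w \<in> fg_carrier X. aff_eval \<phi> \<psi> w \<in> S}"
  unfolding affine_pullback_topology_def openin_pullback_topology by auto

lemma affine_pullback_topology_admissible:
  assumes "continuous_map X euclideanreal \<phi>" "continuous_map X euclideanreal \<psi>"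
  shows "fg_group_topology X (affine_pullback_topology X \<phi> \<psi>)"
    and "continuous_map X (affine_pullback_topology X \<phi> \<psi>) fg_embed"
proof -
  let ?T = "affine_pullback_topology X \<phi> \<psi>" and ?h = "aff_eval \<phi> \<psi>"
  have "continuous_map (prod_topology ?T ?T) euclidean (\<lambda>(w, v). (?h w, ?h v))"
    using continuous_map_pairedI[OF continuous_map_compose[OF continuous_map_fst continuous_map_aff_eval]
        continuous_map_compose[OF continuous_map_snd continuous_map_aff_eval]]
    by (simp only: prod_topology_euclidean o_def case_prod_unfold)
  moreover have "continuous_map euclidean euclidean (\<lambda>(a, b). aff_mult a b)"
    unfolding continuous_map_iff_continuous2 aff_mult_def case_prod_unfold by (intro continuous_intros)
  ultimately have "continuous_map (prod_topology ?T ?T) euclidean ((\<lambda>(a, b). aff_mult a b) \<circ> (\<lambda>(w, v). (?h w, ?h v)))"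
    by (rule continuous_map_compose)
  moreover have "(\<lambda>(a, b). aff_mult a b) \<circ> (\<lambda>(w, v). (?h w, ?h v)) = ?h \<circ> (\<lambda>(w, v). fg_mult w v)"
    by (auto simp: aff_eval_fg_mult)
  ultimately have mult: "continuous_map (prod_topology ?T ?T) ?T (\<lambda>(w, v). fg_mult w v)"
    by (intro continuous_map_into_affine_pullback_topology) (auto simp: fg_mult_in_carrier)
  have "continuous_map euclidean euclidean aff_inv"
    unfolding continuous_map_iff_continuous2 aff_inv_def by (intro continuous_intros)
  then have "continuous_map ?T euclidean (aff_inv \<circ> ?h)"
    by (rule continuous_map_compose[OF continuous_map_aff_eval])
  then have inv: "continuous_map ?T ?T fg_inv"
    by (intro continuous_map_into_affine_pullback_topology) (auto simp: o_def aff_eval_fg_inv fg_inv_in_carrier)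
  show "fg_group_topology X ?T"
    using mult inv by (simp add: fg_group_topology_def)
  have "continuous_map X euclidean (\<lambda>x. (\<phi> x, \<psi> x))"
    using continuous_map_pairedI[OF assms] by (simp only: prod_topology_euclidean)
  then show "continuous_map X ?T fg_embed"
    by (intro continuous_map_into_affine_pullback_topology) (auto simp: o_def fg_embed_in_carrier)
qed

section \<open>The free topological group\<close>

lemma limitin_topology_generated_by:
  assumes "x \<in> \<Union>\<S>" and "\<And>U. U \<in> \<S> \<Longrightarrow> x \<in> U \<Longrightarrow> \<forall>\<^sub>F n in F. z n \<in> U"
  shows "limitin (topology_generated_by \<S>) z x F"
proof -
  have "x \<in> U \<longrightarrow> (\<forall>\<^sub>F n in F. z n \<in> U)" if "generate_topology_on \<S> U" for U
    using that
  proof (induction rule: generate_topology_on.induct)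
    case (Int a b)
    then show ?case by (auto simp: eventually_conj_iff)
  next
    case (UN K)
    then show ?case by (blast intro: eventually_mono)
  qed (use assms(2) in auto)
  then show ?thesis
    using assms(1) by (simp add: limitin_def openin_topology_generated_by_iff)
qed

lemma openin_free_top_group:
  assumes "fg_group_topology X T" "continuous_map X T fg_embed" "openin T U"
  shows "openin (free_top_group X) U"
  unfolding free_top_group_def by (rule topology_generated_by_Basis) (use assms in blast)

lemma topspace_free_top_group: "topspace (free_top_group X) = fg_carrier X"
proof -
  have "\<Union>(\<Union>{{U. openin T U} | T. fg_group_topology X T \<and> continuous_map X T fg_embed}) \<subseteq> fg_carrier X"
    by (auto simp: fg_group_topology_def dest: openin_subset)
  moreover have "openin (affine_pullback_topology X (\<lambda>_. 0) (\<lambda>_. 0)) (fg_carrier X)"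
    by (metis openin_topspace topspace_affine_pullback_topology)
  ultimately show ?thesis
    using affine_pullback_topology_admissible[of X "\<lambda>_. 0" "\<lambda>_. 0"]
    unfolding free_top_group_def by (auto 4 4)
qed

lemma limitin_free_top_group:
  assumes "\<And>T. fg_group_topology X T \<Longrightarrow> continuous_map X T fg_embed \<Longrightarrow> limitin T z e F"
    and "e \<in> fg_carrier X"
  shows "limitin (free_top_group X) z e F"
  using assms topspace_free_top_group[of X]
  unfolding free_top_group_def
  by (intro limitin_topology_generated_by) (auto simp: limitin_def)

definition fg_conj_ratio :: "'a \<Rightarrow> 'a \<Rightarrow> 'a \<Rightarrow> 'a word" where
  "fg_conj_ratio a p y =
     fg_mult (fg_mult (fg_mult (fg_embed a) (fg_embed y)) (fg_inv (fg_embed p))) (fg_inv (fg_embed a))"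

lemma fg_conj_ratio_self: "fg_conj_ratio a p p = fg_unit"
  by (simp add: fg_conj_ratio_def fg_mult_def fg_embed_def fg_inv_def fg_unit_def)

lemma continuous_map_fg_mult_const:
  assumes "fg_group_topology X T" "c \<in> fg_carrier X"
  shows "continuous_map T T (\<lambda>w. fg_mult c w)" "continuous_map T T (\<lambda>w. fg_mult w c)"
proof -
  have M: "continuous_map (prod_topology T T) T (\<lambda>(w, v). fg_mult w v)"
    and c: "c \<in> topspace T"
    using assms by (auto simp: fg_group_topology_def)
  show "continuous_map T T (\<lambda>w. fg_mult c w)"
    using continuous_map_compose[OF continuous_map_pairedI[OF continuous_map_const[THEN iffD2] continuous_map_id] M] c
    by (simp add: o_def)
  show "continuous_map T T (\<lambda>w. fg_mult w c)"
    using continuous_map_compose[OF continuous_map_pairedI[OF continuous_map_id continuous_map_const[THEN iffD2]] M] c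
    by (simp add: o_def)
qed

lemma limitin_fg_conj_ratio:
  assumes s: "limitin X s p sequentially" and a: "a \<in> topspace X"
  shows "limitin (free_top_group X) (\<lambda>n. fg_conj_ratio a p (s n)) fg_unit sequentially"
proof (rule limitin_free_top_group[OF _ fg_unit_in_carrier])
  fix T assume G: "fg_group_topology X T" and E: "continuous_map X T fg_embed"
  have p: "p \<in> topspace X"
    using s by (simp add: limitin_def)
  define F where "F = (\<lambda>w. fg_mult (fg_mult (fg_mult (fg_embed a) w) (fg_inv (fg_embed p))) (fg_inv (fg_embed a)))"
  have "fg_embed a \<in> fg_carrier X" "fg_inv (fg_embed a) \<in> fg_carrier X"
    "fg_inv (fg_embed p) \<in> fg_carrier X"
    using a p by (simp_all add: fg_embed_in_carrier fg_inv_in_carrier)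
  then have "continuous_map T T (\<lambda>w. fg_mult (fg_embed a) w)"
    and "continuous_map T T (\<lambda>w. fg_mult w (fg_inv (fg_embed p)))"
    and "continuous_map T T (\<lambda>w. fg_mult w (fg_inv (fg_embed a)))"
    using continuous_map_fg_mult_const[OF G] by blast+
  from continuous_map_compose[OF continuous_map_compose[OF this(1,2)] this(3)]
  have "continuous_map T T F"
    by (simp add: F_def o_def)
  then have "limitin T (F \<circ> (fg_embed \<circ> s)) (F (fg_embed p)) sequentially"
    using continuous_map_limit[OF _ continuous_map_limit[OF E s]] by blast
  moreover have "F (fg_embed p) = fg_unit"
    using fg_conj_ratio_self[of a p] by (simp add: F_def fg_conj_ratio_def)
  ultimately show "limitin T (\<lambda>n. fg_conj_ratio a p (s n)) fg_unit sequentially"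
    by (simp add: F_def fg_conj_ratio_def o_def)
qed

lemma snd_aff_eval_fg_conj_ratio:
  assumes "\<phi> p = 0" "\<psi> p = 0" "\<psi> y = 0"
  shows "snd (aff_eval \<phi> \<psi> (fg_conj_ratio a p y)) = \<psi> a * (1 - exp (\<phi> y))"
  using assms
  by (simp add: fg_conj_ratio_def aff_eval_fg_mult aff_eval_fg_inv aff_mult_def aff_inv_def
      algebra_simps exp_minus exp_add)

lemma abs_snd_aff_eval_fg_conj_ratio:
  assumes "\<phi> p = 0" "\<psi> p = 0" "\<psi> y = 0" "\<phi> y \<noteq> 0" "\<psi> a = c / \<bar>1 - exp (\<phi> y)\<bar>"
  shows "\<bar>snd (aff_eval \<phi> \<psi> (fg_conj_ratio a p y))\<bar> = \<bar>c\<bar>"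
proof -
  have "1 - exp (\<phi> y) \<noteq> 0"
    using assms(4) by simp
  then show ?thesis
    using snd_aff_eval_fg_conj_ratio[of \<phi> p \<psi> y a, OF assms(1-3)] assms(5) by (simp add: abs_mult)
qed

section \<open>Consequences of a \<open>\<G>\<close>-base\<close>

definition G_cylinder :: "((nat \<Rightarrow> nat) \<Rightarrow> 'g set) \<Rightarrow> nat list \<Rightarrow> 'g set" where
  "G_cylinder U \<sigma> = \<Inter>{U g | g. \<forall>i<length \<sigma>. g i = \<sigma> ! i}"

lemma G_cylinder_prefix: "G_cylinder U (map f [0..<k]) = \<Inter>{U g | g. \<forall>i<k. g i = f i}"
  by (simp add: G_cylinder_def)

text \<open>A diagonal argument: if every cylinder at \<open>f\<close> contained only finitely many terms, dominating
  all the witnesses \<open>g\<^sub>k\<close> by a single \<open>h\<close> would give a neighbourhood \<open>U h\<close> missing infinitely many terms.\<close>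

lemma G_base_cylinder_frequently:
  fixes U :: "(nat \<Rightarrow> nat) \<Rightarrow> 'g set"
  assumes mono: "\<And>\<alpha> \<beta>. (\<forall>n. \<alpha> n \<le> \<beta> n) \<Longrightarrow> U \<beta> \<subseteq> U \<alpha>"
    and nhd: "\<And>\<alpha>. e \<in> T interior_of (U \<alpha>)"
    and lim: "limitin T z e sequentially"
  shows "\<exists>k. infinite {n. z n \<in> G_cylinder U (map f [0..<k])}"
proof (rule ccontr)
  assume "\<nexists>k. infinite {n. z n \<in> G_cylinder U (map f [0..<k])}"
  then have "finite {n. z n \<in> G_cylinder U (map f [0..<k])}" for k
    by blast
  then have "\<exists>n g. k \<le> n \<and> (\<forall>i<k. g i = f i) \<and> z n \<notin> U g" for k
  proof -
    obtain N where "\<And>n. z n \<in> G_cylinder U (map f [0..<k]) \<Longrightarrow> n \<le> N"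
      using \<open>finite {n. z n \<in> G_cylinder U (map f [0..<k])}\<close>
      by (auto simp: finite_nat_set_iff_bounded_le)
    then have "z (max k (Suc N)) \<notin> G_cylinder U (map f [0..<k])"
      by (meson Suc_n_not_le_n max.cobounded2 order_trans)
    then have "z (max k (Suc N)) \<notin> \<Inter>{U g | g. \<forall>i<k. g i = f i}"
      by (metis G_cylinder_prefix)
    moreover have "k \<le> max k (Suc N)"
      by simp
    ultimately show ?thesis
      by blast
  qed
  then obtain nn where "\<forall>k. \<exists>g. k \<le> nn k \<and> (\<forall>i<k. g i = f i) \<and> z (nn k) \<notin> U g"
    using choice[of "\<lambda>k n. \<exists>g. k \<le> n \<and> (\<forall>i<k. g i = f i) \<and> z n \<notin> U g"] by blast
  then obtain gg where "\<forall>k. k \<le> nn k \<and> (\<forall>i<k. gg k i = f i) \<and> z (nn k) \<notin> U (gg k)"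
    using choice[of "\<lambda>k g. k \<le> nn k \<and> (\<forall>i<k. g i = f i) \<and> z (nn k) \<notin> U g"] by blast
  then have nn: "\<And>k. k \<le> nn k" and gg: "\<And>k i. i < k \<Longrightarrow> gg k i = f i"
    and out: "\<And>k. z (nn k) \<notin> U (gg k)"
    by auto
  define h where "h i = f i + (\<Sum>k\<le>i. gg k i)" for i
  have "gg k i \<le> h i" for k i
  proof (cases "k \<le> i")
    case True
    then show ?thesis
      using member_le_sum[of k "{..i}" "\<lambda>k. gg k i"] by (simp add: h_def)
  qed (use gg[of i k] in \<open>simp add: h_def\<close>)
  then have "U h \<subseteq> U (gg k)" for k
    by (intro mono) simp
  then have outh: "z (nn k) \<notin> U h" for k
    using out by blast
  have "\<forall>\<^sub>F n in sequentially. z n \<in> T interior_of (U h)"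
    using lim nhd[of h] openin_interior_of unfolding limitin_def by blast
  then obtain N where "\<And>n. N \<le> n \<Longrightarrow> z n \<in> T interior_of (U h)"
    unfolding eventually_sequentially by blast
  then have "z (nn N) \<in> T interior_of (U h)"
    using nn by blast
  then have "z (nn N) \<in> U h"
    using interior_of_subset by fast
  then show False
    using outh by blast
qed

lemma nat_inj_choice:
  assumes "\<And>k::nat. infinite (B k)"
  shows "\<exists>\<alpha>. inj \<alpha> \<and> (\<forall>k. \<alpha> k \<in> B k)"
proof -
  have "\<forall>k F. \<exists>x. finite F \<longrightarrow> x \<in> B k - F"
    using assms by (metis Diff_infinite_finite finite.emptyI infinite_imp_nonempty ex_in_conv)
  then obtain pick where pick: "\<And>k F. finite F \<Longrightarrow> pick k F \<in> B k - F"
    by metis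
  define prefix where "prefix = rec_nat [] (\<lambda>k l. l @ [pick k (set l)])"
  define \<alpha> where "\<alpha> k = pick k (set (prefix k))" for k
  have prefix: "set (prefix k) = \<alpha> ` {..<k}" for k
    by (induction k) (auto simp: prefix_def \<alpha>_def lessThan_Suc)
  have "\<alpha> k \<in> B k - set (prefix k)" for k
    unfolding \<alpha>_def by (rule pick) simp
  then have \<alpha>: "\<alpha> k \<in> B k" "\<alpha> k \<notin> \<alpha> ` {..<k}" for k
    unfolding prefix by auto
  have "inj \<alpha>"
  proof (rule injI)
    fix i j assume "\<alpha> i = \<alpha> j"
    then show "i = j"
      using \<alpha>(2)[of i] \<alpha>(2)[of j] by (metis linorder_neqE_nat lessThan_iff image_eqI)
  qed
  then show ?thesis
    using \<alpha>(1) by blast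
qed

lemma countable_inj_choice:
  assumes "countable J" and "\<And>j. j \<in> J \<Longrightarrow> infinite (B j)"
  shows "\<exists>\<alpha>. inj_on \<alpha> J \<and> (\<forall>j\<in>J. \<alpha> j \<in> B j)"
proof (cases "J = {}")
  case False
  then obtain \<beta> where \<beta>: "inj \<beta>" "\<And>k. \<beta> k \<in> B (from_nat_into J k)"
    using nat_inj_choice[of "\<lambda>k. B (from_nat_into J k)"] assms(2) from_nat_into by metis
  have "inj_on (\<beta> \<circ> to_nat_on J) J"
    using \<beta>(1) inj_on_to_nat_on[OF assms(1)] by (simp add: comp_inj_on inj_on_subset)
  moreover have "(\<beta> \<circ> to_nat_on J) j \<in> B j" if "j \<in> J" for j
    using \<beta>(2)[of "to_nat_on J j"] from_nat_into_to_nat_on[OF assms(1) that] by simp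
  ultimately show ?thesis
    by blast
qed simp

text \<open>Uncountability of \<open>D\<close> is used once: some \<open>a\<^sub>0 \<in> D\<close> lies in no finite \<open>B \<sigma>\<close>, so every
  cylinder visited infinitely often by \<open>z a\<^sub>0\<close> is visited infinitely often by infinitely many
  sequences, which leaves room to pick a different sequence for each cylinder.\<close>

lemma G_base_choose_terms:
  fixes U :: "(nat \<Rightarrow> nat) \<Rightarrow> 'g set" and z :: "'x \<Rightarrow> nat \<Rightarrow> 'g"
  assumes mono: "\<And>\<alpha> \<beta>. (\<forall>n. \<alpha> n \<le> \<beta> n) \<Longrightarrow> U \<beta> \<subseteq> U \<alpha>"
    and nhd: "\<And>\<alpha>. e \<in> T interior_of (U \<alpha>)"
    and lim: "\<And>a. a \<in> D \<Longrightarrow> limitin T (z a) e sequentially"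
    and unc: "uncountable D"
  shows "\<exists>\<mu>. \<forall>f. \<exists>a\<in>D. z a (\<mu> a) \<in> U f"
proof -
  define B where "B \<sigma> = {a \<in> D. infinite {n. z a n \<in> G_cylinder U \<sigma>}}" for \<sigma>
  define J where "J = {\<sigma>. infinite (B \<sigma>)}"
  have "countable (\<Union>\<sigma>\<in>{\<sigma>. finite (B \<sigma>)}. B \<sigma>)"
    by (intro countable_UN countableI_type) (auto intro: countable_finite)
  then have "\<not> D \<subseteq> (\<Union>\<sigma>\<in>{\<sigma>. finite (B \<sigma>)}. B \<sigma>)"
    using unc countable_subset by blast
  then obtain a0 where a0: "a0 \<in> D" "\<And>\<sigma>. a0 \<in> B \<sigma> \<Longrightarrow> \<sigma> \<in> J"
    unfolding J_def by blast
  have "countable J"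
    by (rule countableI_type)
  then obtain \<alpha> where \<alpha>: "inj_on \<alpha> J" "\<And>\<sigma>. \<sigma> \<in> J \<Longrightarrow> \<alpha> \<sigma> \<in> B \<sigma>"
    using countable_inj_choice[of J B] unfolding J_def by blast
  have "\<forall>\<sigma>\<in>J. \<exists>m. z (\<alpha> \<sigma>) m \<in> G_cylinder U \<sigma>"
    using \<alpha>(2) by (auto simp: B_def dest: infinite_imp_nonempty)
  then obtain m where m: "\<And>\<sigma>. \<sigma> \<in> J \<Longrightarrow> z (\<alpha> \<sigma>) (m \<sigma>) \<in> G_cylinder U \<sigma>"
    using bchoice[of J "\<lambda>\<sigma> m. z (\<alpha> \<sigma>) m \<in> G_cylinder U \<sigma>"] by blast
  have "\<exists>a\<in>D. z a (m (inv_into J \<alpha> a)) \<in> U f" for f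
  proof -
    obtain k where "infinite {n. z a0 n \<in> G_cylinder U (map f [0..<k])}"
      using G_base_cylinder_frequently[of U e T "z a0" f, OF mono nhd lim[OF a0(1)]] by blast
    then have "a0 \<in> B (map f [0..<k])"
      using a0(1) by (simp add: B_def)
    then have \<sigma>: "map f [0..<k] \<in> J"
      by (rule a0(2))
    moreover have "G_cylinder U (map f [0..<k]) \<subseteq> U f"
      unfolding G_cylinder_prefix by blast
    moreover have "\<alpha> (map f [0..<k]) \<in> D"
      using \<alpha>(2)[OF \<sigma>] by (simp add: B_def)
    ultimately show ?thesis
      using m[OF \<sigma>] inv_into_f_f[OF \<alpha>(1) \<sigma>] by (metis subsetD)
  qed
  then show ?thesis
    by (intro exI[of _ "\<lambda>a. m (inv_into J \<alpha> a)"]) simp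
qed

lemma has_G_base_choose_terms:
  fixes z :: "'x \<Rightarrow> nat \<Rightarrow> 'g"
  assumes "has_G_base T e" and "uncountable D"
    and "\<And>a. a \<in> D \<Longrightarrow> limitin T (z a) e sequentially"
  obtains \<mu> where "\<And>W. openin T W \<Longrightarrow> e \<in> W \<Longrightarrow> \<exists>a\<in>D. z a (\<mu> a) \<in> W"
proof -
  obtain U :: "(nat \<Rightarrow> nat) \<Rightarrow> 'g set" where
    "(\<forall>\<alpha>. U \<alpha> \<subseteq> topspace T \<and> e \<in> T interior_of (U \<alpha>)) \<and>
     (\<forall>W. openin T W \<and> e \<in> W \<longrightarrow> (\<exists>\<alpha>. U \<alpha> \<subseteq> W)) \<and>
     (\<forall>\<alpha> \<beta>. (\<forall>n. \<alpha> n \<le> \<beta> n) \<longrightarrow> U \<beta> \<subseteq> U \<alpha>)"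
    using assms(1) unfolding has_G_base_def by (elim exE)
  then have U: "\<And>\<alpha>. e \<in> T interior_of (U \<alpha>)"
    "\<And>W. openin T W \<Longrightarrow> e \<in> W \<Longrightarrow> \<exists>\<alpha>. U \<alpha> \<subseteq> W"
    "\<And>\<alpha> \<beta>. \<forall>n. \<alpha> n \<le> \<beta> n \<Longrightarrow> U \<beta> \<subseteq> U \<alpha>"
    by simp_all
  obtain \<mu> where \<mu>: "\<And>f. \<exists>a\<in>D. z a (\<mu> a) \<in> U f"
    using G_base_choose_terms[where U = U and z = z, OF U(3) U(1) assms(3) assms(2)] by blast
  show thesis
  proof (rule that)
    fix W assume "openin T W" "e \<in> W"
    then obtain f where "U f \<subseteq> W"
      using U(2) by blast
    then show "\<exists>a\<in>D. z a (\<mu> a) \<in> W"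
      using \<mu>[of f] by blast
  qed
qed

section \<open>Real-valued functions on completely regular and collectionwise normal spaces\<close>

lemma continuous_map_eq_locally:
  assumes "\<And>x. x \<in> topspace X \<Longrightarrow>
      \<exists>W g. openin X W \<and> x \<in> W \<and> continuous_map X Y g \<and> (\<forall>y\<in>W. f y = g y)"
  shows "continuous_map X Y f"
  unfolding continuous_map_def
proof (intro conjI allI impI)
  show "f \<in> topspace X \<rightarrow> topspace Y"
  proof
    fix x assume "x \<in> topspace X"
    then obtain W g where "x \<in> W" and g: "continuous_map X Y g" and "\<forall>y\<in>W. f y = g y"
      using assms by blast
    then have "f x = g x"
      by blast
    also have "g x \<in> topspace Y"
      using continuous_map_image_subset_topspace[OF g] \<open>x \<in> topspace X\<close> by blast
    finally show "f x \<in> topspace Y" .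
  qed
  fix U assume U: "openin Y U"
  show "openin X {x \<in> topspace X. f x \<in> U}"
  proof (subst openin_subopen, intro ballI)
    fix x assume x: "x \<in> {x \<in> topspace X. f x \<in> U}"
    then obtain W g where W: "openin X W" "x \<in> W" and g: "continuous_map X Y g"
      and fg: "\<forall>y\<in>W. f y = g y"
      using assms by blast
    have "openin X (W \<inter> {y \<in> topspace X. g y \<in> U})"
      using W(1) openin_continuous_map_preimage[OF g U] by (rule openin_Int)
    moreover have "W \<inter> {y \<in> topspace X. g y \<in> U} \<subseteq> {x \<in> topspace X. f x \<in> U}"
      using fg by auto
    moreover have "x \<in> W \<inter> {y \<in> topspace X. g y \<in> U}"
      using x W(2) fg by auto
    ultimately show "\<exists>T. openin X T \<and> x \<in> T \<and> T \<subseteq> {x \<in> topspace X. f x \<in> U}"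
      by blast
  qed
qed

lemma continuous_map_suminf:
  fixes f :: "nat \<Rightarrow> 'a \<Rightarrow> real"
  assumes cont: "\<And>m. continuous_map X euclideanreal (f m)"
    and bound: "\<And>m x. x \<in> topspace X \<Longrightarrow> \<bar>f m x\<bar> \<le> M m"
    and M: "summable M"
  shows "continuous_map X euclideanreal (\<lambda>x. \<Sum>m. f m x)"
proof -
  have tail: "\<bar>(\<Sum>m<N. f m x) - (\<Sum>m. f m x)\<bar> \<le> (\<Sum>m. M (m + N))" if x: "x \<in> topspace X" for N x
  proof -
    have "summable (\<lambda>m. f m x)"
      by (rule summable_comparison_test'[OF M, of 0]) (simp add: bound[OF x])
    then have "(\<Sum>m. f m x) = (\<Sum>m. f (m + N) x) + (\<Sum>m<N. f m x)"
      by (rule suminf_split_initial_segment)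
    moreover have "\<bar>\<Sum>m. f (m + N) x\<bar> \<le> (\<Sum>m. M (m + N))"
    proof -
      have "summable (\<lambda>m. \<bar>f (m + N) x\<bar>)"
        by (rule summable_comparison_test'[OF summable_ignore_initial_segment[OF M, of N], of 0])
          (simp add: bound[OF x])
      then have "\<bar>\<Sum>m. f (m + N) x\<bar> \<le> (\<Sum>m. \<bar>f (m + N) x\<bar>)"
        using summable_norm[of "\<lambda>m. f (m + N) x"] by simp
      also have "\<dots> \<le> (\<Sum>m. M (m + N))"
        using \<open>summable (\<lambda>m. \<bar>f (m + N) x\<bar>)\<close> summable_ignore_initial_segment[OF M] bound[OF x]
        by (intro suminf_le) simp_all
      finally show ?thesis .
    qed
    ultimately show ?thesis
      by linarith
  qed
  have "continuous_map X Met_TC.mtopology (\<lambda>x. \<Sum>m. f m x)"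
  proof (rule Met_TC.continuous_map_uniform_limit[where f = "\<lambda>N x. \<Sum>m<N. f m x" and F = sequentially])
    show "\<forall>\<^sub>F N in sequentially. continuous_map X Met_TC.mtopology (\<lambda>x. \<Sum>m<N. f m x)"
      using cont by (simp add: continuous_map_sum)
    fix \<epsilon> :: real assume "0 < \<epsilon>"
    then obtain N0 where N0: "\<And>N. N \<ge> N0 \<Longrightarrow> norm (\<Sum>m. M (m + N)) < \<epsilon>"
      using suminf_exist_split[OF _ M] by blast
    show "\<forall>\<^sub>F N in sequentially. \<forall>x\<in>topspace X.
        (\<Sum>m. f m x) \<in> UNIV \<and> dist (\<Sum>m<N. f m x) (\<Sum>m. f m x) < \<epsilon>"
      unfolding eventually_sequentially
    proof (intro exI allI impI ballI conjI)
      fix N x assume "N0 \<le> N" "x \<in> topspace X"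
      then show "dist (\<Sum>m<N. f m x) (\<Sum>m. f m x) < \<epsilon>"
        using tail[of x N] N0[of N] by (simp add: dist_real_def)
    qed simp
  qed simp
  then show ?thesis
    by simp
qed

lemma completely_regular_space_bump:
  assumes "completely_regular_space X" "closedin X C" "a \<in> topspace X - C"
  obtains g where "continuous_map X euclideanreal g" "\<And>x. 0 \<le> g x" "\<And>x. g x \<le> 1"
    "g a = 1" "\<And>x. x \<in> C \<Longrightarrow> g x = 0"
proof -
  have "\<forall>S x. closedin X S \<longrightarrow> x \<in> topspace X - S \<longrightarrow>
      (\<exists>f. continuous_map X euclideanreal f \<and> f x = 1 \<and> f ` S \<subseteq> {0})"
    using assms(1) completely_regular_space_gen_alt[of "1::real" 0 X] by simp
  then obtain f where f: "continuous_map X euclideanreal f" "f a = 1" "f ` C \<subseteq> {0}"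
    using assms(2,3) by blast
  show thesis
  proof
    show "continuous_map X euclideanreal (\<lambda>x. max 0 (min 1 (f x)))"
      using f(1) by (intro continuous_map_real_max continuous_map_real_min) auto
  qed (use f in auto)
qed

lemma completely_regular_space_positive_on_sequence:
  fixes s :: "nat \<Rightarrow> 'a"
  assumes cr: "completely_regular_space X" and C: "closedin X C" and s: "range s \<subseteq> topspace X - C"
  obtains \<phi> where "continuous_map X euclideanreal \<phi>" "\<And>x. x \<in> C \<Longrightarrow> \<phi> x = 0" "\<And>n. \<phi> (s n) > 0"
proof -
  have "\<forall>n. \<exists>g. continuous_map X euclideanreal g \<and> (\<forall>x. 0 \<le> g x \<and> g x \<le> 1) \<and>
      g (s n) = 1 \<and> (\<forall>x\<in>C. g x = 0)"
  proof
    fix n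
    have "s n \<in> topspace X - C"
      using s by auto
    then show "\<exists>g. continuous_map X euclideanreal g \<and> (\<forall>x. 0 \<le> g x \<and> g x \<le> 1) \<and>
      g (s n) = 1 \<and> (\<forall>x\<in>C. g x = 0)"
      by (rule completely_regular_space_bump[OF cr C]) blast
  qed
  from choice[OF this] obtain g :: "nat \<Rightarrow> 'a \<Rightarrow> real" where
    g: "\<forall>n. continuous_map X euclideanreal (g n) \<and> (\<forall>x. 0 \<le> g n x \<and> g n x \<le> 1) \<and>
      g n (s n) = 1 \<and> (\<forall>x\<in>C. g n x = 0)"
    by blast
  have gc: "\<And>n. continuous_map X euclideanreal (g n)"
    and g01: "\<And>n x. 0 \<le> g n x \<and> g n x \<le> 1" and gs: "\<And>n. g n (s n) = 1"
    and gC: "\<And>n x. x \<in> C \<Longrightarrow> g n x = 0"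
    using g by simp_all
  have M: "summable (\<lambda>m. (1/2::real) ^ m)"
    by simp
  have bound: "\<bar>(1/2) ^ m * g m x\<bar> \<le> (1/2::real) ^ m" for m x
    using g01[of m x] by (simp add: mult_le_cancel_left1)
  have summ: "summable (\<lambda>m. (1/2::real) ^ m * g m x)" for x
    by (rule summable_comparison_test'[OF M, of 0]) (simp add: bound)
  show thesis
  proof
    show "continuous_map X euclideanreal (\<lambda>x. \<Sum>m. (1/2) ^ m * g m x)"
      by (rule continuous_map_suminf[OF _ bound M])
        (intro continuous_map_real_mult continuous_map_canonical_const gc)
    show "(\<Sum>m. (1/2) ^ m * g m x) = 0" if "x \<in> C" for x
      using gC[OF that] by simp
    show "(\<Sum>m. (1/2) ^ m * g m (s n)) > 0" for n
      by (rule suminf_pos2[OF summ[of "s n"], where i = n]) (simp_all add: g01 gs)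
  qed
qed

lemma discrete_familyE:
  assumes "discrete_family X I F" "x \<in> topspace X"
  obtains W where "openin X W" "x \<in> W"
    "\<And>i j. i \<in> I \<Longrightarrow> j \<in> I \<Longrightarrow> W \<inter> F i \<noteq> {} \<Longrightarrow> W \<inter> F j \<noteq> {} \<Longrightarrow> i = j"
  using assms unfolding discrete_family_def by meson

lemma discrete_familyI:
  assumes "\<And>x. x \<in> topspace X \<Longrightarrow> \<exists>W. openin X W \<and> x \<in> W \<and>
      (\<forall>i\<in>I. \<forall>j\<in>I. W \<inter> F i \<noteq> {} \<longrightarrow> W \<inter> F j \<noteq> {} \<longrightarrow> i = j)"
  shows "discrete_family X I F"
  using assms unfolding discrete_family_def by meson

lemma discrete_family_mono:
  assumes "discrete_family X I F" and "\<And>i. i \<in> I \<Longrightarrow> G i \<subseteq> F i"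
  shows "discrete_family X I G"
proof (rule discrete_familyI)
  fix x assume "x \<in> topspace X"
  then obtain W where W: "openin X W" "x \<in> W"
    and one: "\<And>i j. i \<in> I \<Longrightarrow> j \<in> I \<Longrightarrow> W \<inter> F i \<noteq> {} \<Longrightarrow> W \<inter> F j \<noteq> {} \<Longrightarrow> i = j"
    using discrete_familyE[OF assms(1)] by blast
  have "\<forall>i\<in>I. \<forall>j\<in>I. W \<inter> G i \<noteq> {} \<longrightarrow> W \<inter> G j \<noteq> {} \<longrightarrow> i = j"
  proof (intro ballI impI)
    fix i j assume ij: "i \<in> I" "j \<in> I" "W \<inter> G i \<noteq> {}" "W \<inter> G j \<noteq> {}"
    then have "W \<inter> F i \<noteq> {}" "W \<inter> F j \<noteq> {}"
      using assms(2)[OF ij(1)] assms(2)[OF ij(2)] by blast+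
    then show "i = j"
      by (rule one[OF ij(1,2)])
  qed
  then show "\<exists>W. openin X W \<and> x \<in> W \<and> (\<forall>i\<in>I. \<forall>j\<in>I. W \<inter> G i \<noteq> {} \<longrightarrow> W \<inter> G j \<noteq> {} \<longrightarrow> i = j)"
    using W by (intro exI[of _ W] conjI)
qed

lemma discrete_family_paste:
  assumes disc: "discrete_family X D V"
    and opn: "\<And>a. a \<in> D \<Longrightarrow> openin X (V a)"
    and cont: "\<And>a. a \<in> D \<Longrightarrow> continuous_map X euclideanreal (F a)"
    and vanish: "\<And>a x. a \<in> D \<Longrightarrow> x \<in> topspace X - V a \<Longrightarrow> F a x = 0"
  obtains \<psi> where "continuous_map X euclideanreal \<psi>"
    "\<And>a x. a \<in> D \<Longrightarrow> x \<in> V a \<Longrightarrow> \<psi> x = F a x" "\<And>x. \<forall>a\<in>D. x \<notin> V a \<Longrightarrow> \<psi> x = 0"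
proof -
  have unique: "a = b" if ab: "a \<in> D" "b \<in> D" "x \<in> V a" "x \<in> V b" for a b x
  proof -
    have "x \<in> topspace X"
      using openin_subset[OF opn[OF ab(1)]] ab(3) by blast
    then obtain W where "openin X W" "x \<in> W"
      and one: "\<And>i j. i \<in> D \<Longrightarrow> j \<in> D \<Longrightarrow> W \<inter> V i \<noteq> {} \<Longrightarrow> W \<inter> V j \<noteq> {} \<Longrightarrow> i = j"
      using discrete_familyE[OF disc] by blast
    have "W \<inter> V a \<noteq> {}" "W \<inter> V b \<noteq> {}"
      using \<open>x \<in> W\<close> ab(3,4) by blast+
    then show "a = b"
      by (rule one[OF ab(1,2)])
  qed
  define \<psi> where "\<psi> x = (if \<exists>a\<in>D. x \<in> V a then F (SOME a. a \<in> D \<and> x \<in> V a) x else 0)" for x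
  have \<psi>V: "\<psi> x = F a x" if "a \<in> D" "x \<in> V a" for a x
  proof -
    have "(SOME a. a \<in> D \<and> x \<in> V a) = a"
      using that unique by (intro some_equality) auto
    then show ?thesis
      using that by (auto simp: \<psi>_def)
  qed
  have \<psi>0: "\<psi> x = 0" if "\<forall>a\<in>D. x \<notin> V a" for x
    using that by (simp add: \<psi>_def)
  have "continuous_map X euclideanreal \<psi>"
  proof (rule continuous_map_eq_locally)
    fix x assume "x \<in> topspace X"
    then obtain W where W: "openin X W" "x \<in> W"
      and one: "\<And>i j. i \<in> D \<Longrightarrow> j \<in> D \<Longrightarrow> W \<inter> V i \<noteq> {} \<Longrightarrow> W \<inter> V j \<noteq> {} \<Longrightarrow> i = j"
      using discrete_familyE[OF disc] by blast
    show "\<exists>W g. openin X W \<and> x \<in> W \<and> continuous_map X euclideanreal g \<and> (\<forall>y\<in>W. \<psi> y = g y)"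
    proof (cases "\<exists>b\<in>D. W \<inter> V b \<noteq> {}")
      case True
      then obtain b where b: "b \<in> D" "W \<inter> V b \<noteq> {}"
        by blast
      have "\<psi> y = F b y" if y: "y \<in> W" for y
      proof (cases "\<exists>a\<in>D. y \<in> V a")
        case True
        then obtain a where a: "a \<in> D" "y \<in> V a"
          by blast
        then have "W \<inter> V a \<noteq> {}"
          using y by blast
        then have "a = b"
          using one[OF a(1) b(1) _ b(2)] by blast
        then show ?thesis
          using \<psi>V[OF a] by simp
      next
        case False
        moreover have "y \<in> topspace X - V b"
          using openin_subset[OF W(1)] y False b(1) by blast
        ultimately show ?thesis
          using \<psi>0 vanish[OF b(1)] by simp
      qed
      then show ?thesis
        using W cont[OF b(1)] by blast
    next
      case False
      then have "\<psi> y = 0" if "y \<in> W" for y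
        using that by (intro \<psi>0) blast
      then show ?thesis
        using W by (intro exI[of _ W] exI[of _ "\<lambda>_. 0"]) simp
    qed
  qed
  from this \<psi>V \<psi>0 show thesis
    by (rule that)
qed

lemma collectionwise_normal_discrete_expansion:
  assumes cn: "collectionwise_normal X" and D: "D \<subseteq> topspace X" and iso: "X derived_set_of D = {}"
  obtains V where "\<And>a. a \<in> D \<Longrightarrow> openin X (V a)" "\<And>a. a \<in> D \<Longrightarrow> a \<in> V a"
    "discrete_family X D V"
proof -
  define \<F> where "\<F> = (\<lambda>a. {a}) ` D"
  have "t1_space X"
    using cn by (simp add: collectionwise_normal_def)
  then have closed: "\<forall>F\<in>\<F>. closedin X F"
    using D by (auto simp: \<F>_def intro: closedin_t1_singleton)
  have "discrete_family X \<F> id"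
  proof (rule discrete_familyI)
    fix x assume x: "x \<in> topspace X"
    then have "x \<notin> X derived_set_of D"
      using iso by simp
    then obtain W where W: "openin X W" "x \<in> W" and only: "\<And>y. y \<in> D \<Longrightarrow> y \<in> W \<Longrightarrow> y = x"
      using x by (auto simp: derived_set_of_def)
    have "\<forall>i\<in>\<F>. \<forall>j\<in>\<F>. W \<inter> id i \<noteq> {} \<longrightarrow> W \<inter> id j \<noteq> {} \<longrightarrow> i = j"
      using only by (auto simp: \<F>_def)
    then show "\<exists>W. openin X W \<and> x \<in> W \<and> (\<forall>i\<in>\<F>. \<forall>j\<in>\<F>. W \<inter> id i \<noteq> {} \<longrightarrow> W \<inter> id j \<noteq> {} \<longrightarrow> i = j)"
      using W by (intro exI[of _ W] conjI)
  qed
  then obtain V where V: "\<forall>F\<in>\<F>. openin X (V F) \<and> F \<subseteq> V F" "discrete_family X \<F> V"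
    using cn closed unfolding collectionwise_normal_def by meson
  have "openin X (V {a})" "a \<in> V {a}" if "a \<in> D" for a
    using V(1) that by (auto simp: \<F>_def)
  moreover have "discrete_family X D (\<lambda>a. V {a})"
  proof (rule discrete_familyI)
    fix x assume "x \<in> topspace X"
    then obtain W where W: "openin X W" "x \<in> W"
      and one: "\<And>i j. i \<in> \<F> \<Longrightarrow> j \<in> \<F> \<Longrightarrow> W \<inter> V i \<noteq> {} \<Longrightarrow> W \<inter> V j \<noteq> {} \<Longrightarrow> i = j"
      using discrete_familyE[OF V(2)] by blast
    have "\<forall>a\<in>D. \<forall>b\<in>D. W \<inter> V {a} \<noteq> {} \<longrightarrow> W \<inter> V {b} \<noteq> {} \<longrightarrow> a = b"
    proof (intro ballI impI)
      fix a b assume ab: "a \<in> D" "b \<in> D" "W \<inter> V {a} \<noteq> {}" "W \<inter> V {b} \<noteq> {}"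
      have "{a} \<in> \<F>" "{b} \<in> \<F>"
        using ab(1,2) by (simp_all add: \<F>_def)
      from one[OF this ab(3,4)] show "a = b"
        by simp
    qed
    then show "\<exists>W. openin X W \<and> x \<in> W \<and>
        (\<forall>a\<in>D. \<forall>b\<in>D. W \<inter> V {a} \<noteq> {} \<longrightarrow> W \<inter> V {b} \<noteq> {} \<longrightarrow> a = b)"
      using W by (intro exI[of _ W] conjI)
  qed
  ultimately show thesis
    by (rule that)
qed

text \<open>This is where collectionwise normality enters: a function with arbitrary prescribed values on
  a closed discrete set extends continuously.\<close>

lemma collectionwise_normal_extend_from_closed_discrete:
  fixes c :: "'a \<Rightarrow> real"
  assumes cn: "collectionwise_normal X" and cr: "completely_regular_space X"
    and D: "D \<subseteq> topspace X" "X derived_set_of D = {}" and K: "closedin X K" "D \<inter> K = {}"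
  obtains \<psi> where "continuous_map X euclideanreal \<psi>" "\<And>a. a \<in> D \<Longrightarrow> \<psi> a = c a"
    "\<And>x. x \<in> K \<Longrightarrow> \<psi> x = 0"
proof -
  obtain V where V: "\<And>a. a \<in> D \<Longrightarrow> openin X (V a)" "\<And>a. a \<in> D \<Longrightarrow> a \<in> V a"
    "discrete_family X D V"
    using collectionwise_normal_discrete_expansion[OF cn D] by blast
  define V' where "V' a = V a - K" for a
  have V'open: "openin X (V' a)" if "a \<in> D" for a
    unfolding V'_def using V(1)[OF that] K(1) by (rule openin_diff)
  have aV': "a \<in> V' a" if "a \<in> D" for a
    using V(2)[OF that] K(2) that by (auto simp: V'_def)
  have disc: "discrete_family X D V'"
    by (rule discrete_family_mono[OF V(3)]) (simp add: V'_def)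
  have "\<forall>a\<in>D. \<exists>g. continuous_map X euclideanreal g \<and> g a = 1 \<and> (\<forall>x\<in>topspace X - V' a. g x = 0)"
  proof
    fix a assume a: "a \<in> D"
    have "closedin X (topspace X - V' a)"
      using V'open[OF a] by (rule closedin_diff[OF closedin_topspace])
    moreover have "a \<in> topspace X - (topspace X - V' a)"
      using aV'[OF a] D(1) a by blast
    ultimately show "\<exists>g. continuous_map X euclideanreal g \<and> g a = 1 \<and> (\<forall>x\<in>topspace X - V' a. g x = 0)"
      by (rule completely_regular_space_bump[OF cr]) blast
  qed
  from bchoice[OF this] obtain g where
    g: "\<forall>a\<in>D. continuous_map X euclideanreal (g a) \<and> g a a = 1 \<and> (\<forall>x\<in>topspace X - V' a. g a x = 0)"
    by blast
  have "continuous_map X euclideanreal (\<lambda>x. c a * g a x)" if "a \<in> D" for a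
    using g that by (intro continuous_map_real_mult continuous_map_canonical_const) simp_all
  moreover have "c a * g a x = 0" if "a \<in> D" "x \<in> topspace X - V' a" for a x
    using g that by simp
  ultimately obtain \<psi> where \<psi>: "continuous_map X euclideanreal \<psi>"
    "\<And>a x. a \<in> D \<Longrightarrow> x \<in> V' a \<Longrightarrow> \<psi> x = c a * g a x" "\<And>x. \<forall>a\<in>D. x \<notin> V' a \<Longrightarrow> \<psi> x = 0"
    using discrete_family_paste[OF disc V'open, of "\<lambda>a x. c a * g a x"] by blast
  show thesis
  proof (rule that[OF \<psi>(1)])
    show "\<psi> a = c a" if "a \<in> D" for a
      using \<psi>(2)[OF that aV'[OF that]] g that by simp
    show "\<psi> x = 0" if "x \<in> K" for x
      using \<psi>(3) that by (simp add: V'_def)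
  qed
qed

lemma not_aleph1_compact_closed_discrete:
  assumes "\<not> aleph1_compact X" and "countable K"
  obtains D where "D \<subseteq> topspace X - K" "uncountable D" "X derived_set_of D = {}"
proof -
  obtain A where A: "A \<subseteq> topspace X" "uncountable A"
    and "\<forall>x\<in>topspace X. x \<notin> X derived_set_of A"
    using assms(1) unfolding aleph1_compact_def by blast
  then have "X derived_set_of A = {}"
    using derived_set_of_subset_topspace[of X A] by auto
  then have "X derived_set_of (A - K) = {}"
    using derived_set_of_mono[of "A - K" A X] by blast
  moreover have "uncountable (A - K)"
  proof
    assume "countable (A - K)"
    then have "countable (A - K \<union> K)"
      using assms(2) by (rule countable_Un)
    moreover have "A \<subseteq> A - K \<union> K"
      by blast
    ultimately show False
      using A(2) countable_subset by blast
  qed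
  moreover have "A - K \<subseteq> topspace X - K"
    using A(1) by blast
  ultimately show thesis
    using that by blast
qed

lemma free_top_group_affine_neighbourhood:
  assumes "continuous_map X euclideanreal \<phi>" "continuous_map X euclideanreal \<psi>"
  shows "openin (free_top_group X) {w \<in> fg_carrier X. \<bar>snd (aff_eval \<phi> \<psi> w)\<bar> < 1}"
    and "fg_unit \<in> {w \<in> fg_carrier X. \<bar>snd (aff_eval \<phi> \<psi> w)\<bar> < 1}"
proof -
  have "open {q :: real \<times> real. \<bar>snd q\<bar> < 1}"
    by (intro open_Collect_less continuous_intros)
  from openin_affine_pullback_topology[OF this, of X \<phi> \<psi>]
  have "openin (affine_pullback_topology X \<phi> \<psi>) {w \<in> fg_carrier X. \<bar>snd (aff_eval \<phi> \<psi> w)\<bar> < 1}"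
    by simp
  then show "openin (free_top_group X) {w \<in> fg_carrier X. \<bar>snd (aff_eval \<phi> \<psi> w)\<bar> < 1}"
    by (rule openin_free_top_group[OF affine_pullback_topology_admissible[OF assms]])
  show "fg_unit \<in> {w \<in> fg_carrier X. \<bar>snd (aff_eval \<phi> \<psi> w)\<bar> < 1}"
    using fg_unit_in_carrier[of X] by (simp add: fg_unit_def)
qed

theorem theorem4p10:
  fixes X :: "'a topology"
  assumes "collectionwise_normal X"
    and "tychonoff_space X"
    and "has_nontrivial_convergent_seq X"
    and "has_G_base (free_top_group X) fg_unit"
  shows "aleph1_compact X"
proof (rule ccontr)
  assume "\<not> aleph1_compact X"
  have cr: "completely_regular_space X" and t1: "t1_space X"
    using assms(2) by (simp_all add: tychonoff_space_def)
  obtain s p where sX: "range s \<subseteq> topspace X" and "\<And>n. s n \<noteq> p"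
    and lim: "limitin X s p sequentially"
    using assms(3) unfolding has_nontrivial_convergent_seq_def by blast
  define K where "K = insert p (range s)"
  have K: "closedin X K"
    unfolding K_def
    by (rule compactin_imp_closedin[OF regular_t1_imp_Hausdorff_space[OF
          completely_regular_imp_regular_space[OF cr] t1] compactin_sequence_with_limit[OF lim order_refl sX]])
  obtain D where D: "D \<subseteq> topspace X - K" "uncountable D" "X derived_set_of D = {}"
    using not_aleph1_compact_closed_discrete[OF \<open>\<not> aleph1_compact X\<close>, of K] by (auto simp: K_def)
  obtain \<phi> where \<phi>: "continuous_map X euclideanreal \<phi>" "\<And>x. x \<in> {p} \<Longrightarrow> \<phi> x = 0" "\<And>n. \<phi> (s n) > 0"
    using completely_regular_space_positive_on_sequence[OF cr closedin_t1_singleton[OF t1]] sX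
      \<open>\<And>n. s n \<noteq> p\<close> limitin_topspace[OF lim] by blast
  obtain \<mu> where \<mu>: "\<And>W. openin (free_top_group X) W \<Longrightarrow> fg_unit \<in> W \<Longrightarrow>
      \<exists>a\<in>D. fg_conj_ratio a p (s (\<mu> a)) \<in> W"
    using has_G_base_choose_terms[OF assms(4) D(2), of "\<lambda>a n. fg_conj_ratio a p (s n)"]
      limitin_fg_conj_ratio[OF lim] D(1) by blast
  obtain \<psi> where \<psi>: "continuous_map X euclideanreal \<psi>"
    "\<And>a. a \<in> D \<Longrightarrow> \<psi> a = 2 / \<bar>1 - exp (\<phi> (s (\<mu> a)))\<bar>" "\<And>x. x \<in> K \<Longrightarrow> \<psi> x = 0"
    using collectionwise_normal_extend_from_closed_discrete[OF assms(1) cr _ D(3) K,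
        of "\<lambda>a. 2 / \<bar>1 - exp (\<phi> (s (\<mu> a)))\<bar>"] D(1) by blast
  obtain a where "a \<in> D" "\<bar>snd (aff_eval \<phi> \<psi> (fg_conj_ratio a p (s (\<mu> a))))\<bar> < 1"
    using \<mu>[OF free_top_group_affine_neighbourhood[OF \<phi>(1) \<psi>(1)]] by blast
  moreover have "\<bar>snd (aff_eval \<phi> \<psi> (fg_conj_ratio a p (s (\<mu> a))))\<bar> = \<bar>2\<bar>" if "a \<in> D"
    by (rule abs_snd_aff_eval_fg_conj_ratio) (use \<phi>(2) \<phi>(3)[of "\<mu> a"] \<psi>(2)[OF that] \<psi>(3) in \<open>auto simp: K_def\<close>)
  ultimately show False
    by simp
qed

end
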